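(* Let $d\ge1$, $n\in\mathbb{N}$, and fix $s_1\ge0$, $s_2\le0$, $\alpha>0$, $\beta>0$. Let $g\in L^2(\mathbb{T}^d;\mathbb{C})$ with coefficients $\widehat{\mathbf G}=(\hat g_k)_{k\ne0}$ and $g_n\in\mathcal{T}_n$ with coefficients $\widehat{\mathbf G}_n=(\hat g_{n,k})_{k\ne0}$ (zero for $k\notin\mathbb{Z}^d_n$). For $k\ne0$ let $D_k=\alpha\beta|k|^{2(s_2-s_1)}+\alpha+\beta|k|^{2s_2}$ and define $$\mathbf u=\Big(\frac{\alpha\beta|k|^{2(s_2-s_1)}\hat g_k}{D_k}\Big)_{k\ne0},\quad \mathbf v=\Big(\frac{\alpha\hat g_k}{D_k}\Big)_{k\ne0},$$ and $\mathbf u_n,\mathbf v_n$ by the same formulas with $\hat g_{n,k}$ in place of $\hat g_k$ for $k\in\mathbb{Z}^d_n\setminus\{0\}$ and zero for $k\notin\mathbb{Z}^d_n$. (So $(\mathbf u,\mathbf v)$ is the coefficient pair of the minimizer of $I(u,v)=\frac12\|(-\Delta)^{s_1/2}u\|^2+\frac\alpha2\|u+v-g\|^2+\frac\beta2\|R_{s_2/2}(v)\|^2$, and $(\mathbf u_n,\mathbf v_n)$ that of the minimizer of the same functional over $\mathcal{T}_n$ with data $g_n$.) Then $$|\mathbf u-\mathbf u_n|^2_{s_1}+\beta|\mathbf v_n-\mathbf v|^2_{s_2}+\frac\alpha2\|\mathbf u_n+\mathbf v_n-\mathbf u-\mathbf v\|^2_{\ell^2}\le\frac\alpha2\|\widehat{\mathbf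 G}-\widehat{\mathbf G}_n\|^2_{\ell^2}.$$
   Context: $\mathbb{T}^d=\mathbb{R}^d/(2\pi\mathbb{Z})^d$; $\hat u_k=\int_{\mathbb{T}^d}u\,e^{-ik\cdot x}dx$. $\mathbb{Z}^d_n=\{k\in\mathbb{Z}^d:-n/2\le k_i\le n/2-1\ \forall i\}$ and $\mathcal{T}_n$ is the space of trigonometric polynomials $\sum_{k\in\mathbb{Z}^d_n}c_ke^{ik\cdot x}$. $(-\Delta)^\sigma u=(2\pi)^{-d}\sum_k|k|^{2\sigma}\hat u_ke^{ik\cdot x}$, and for $\sigma\le0$, $R_\sigma(u)=(2\pi)^{-d}\sum_{k\ne0}|k|^{2\sigma}\hat u_ke^{ik\cdot x}$. For a sequence $\mathbf w=(w_k)_{k\ne0}$ and $\sigma\in\mathbb{R}$, $|\mathbf w|_\sigma=\big(\sum_{k\ne0}|k|^{2\sigma}|w_k|^2\big)^{1/2}$. *)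

theory Defs
  imports "HOL-Analysis.Analysis"
begin

text \<open>Frequencies k in Z^d are modelled as int ^ 'd, with 'd a finite type (d = CARD('d) >= 1).
  Fourier coefficient sequences are functions int ^ 'd => complex; only k \<noteq> 0 is used.\<close>

definition kabs :: "int ^ 'd::finite \<Rightarrow> real" where
  "kabs k = sqrt (\<Sum>i\<in>UNIV. (real_of_int (k $ i))^2)"

definition Zn :: "nat \<Rightarrow> (int ^ 'd::finite) set" where
  "Zn n = {k. \<forall>i. - real n / 2 \<le> real_of_int (k $ i) \<and> real_of_int (k $ i) \<le> real n / 2 - 1}"

definition wnorm2 :: "real \<Rightarrow> (int ^ 'd::finite \<Rightarrow> complex) \<Rightarrow> ennreal" where
  "wnorm2 \<sigma> w = (\<Sum>\<^sub>\<infinity>k\<in>{k. k \<noteq> 0}. ennreal (kabs k powr (2 * \<sigma>) * (cmod (w k))^2))"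

definition l2norm2 :: "(int ^ 'd::finite \<Rightarrow> complex) \<Rightarrow> ennreal" where
  "l2norm2 w = (\<Sum>\<^sub>\<infinity>k\<in>{k. k \<noteq> 0}. ennreal ((cmod (w k))^2))"

definition Dk :: "real \<Rightarrow> real \<Rightarrow> real \<Rightarrow> real \<Rightarrow> int ^ 'd::finite \<Rightarrow> real" where
  "Dk s1 s2 \<alpha> \<beta> k = \<alpha> * \<beta> * kabs k powr (2 * (s2 - s1)) + \<alpha> + \<beta> * kabs k powr (2 * s2)"

definition ucoef :: "real \<Rightarrow> real \<Rightarrow> real \<Rightarrow> real \<Rightarrow> (int ^ 'd::finite \<Rightarrow> complex) \<Rightarrow> int ^ 'd \<Rightarrow> complex" where
  "ucoef s1 s2 \<alpha> \<beta> G k =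
     complex_of_real (\<alpha> * \<beta> * kabs k powr (2 * (s2 - s1)) / Dk s1 s2 \<alpha> \<beta> k) * G k"

definition vcoef :: "real \<Rightarrow> real \<Rightarrow> real \<Rightarrow> real \<Rightarrow> (int ^ 'd::finite \<Rightarrow> complex) \<Rightarrow> int ^ 'd \<Rightarrow> complex" where
  "vcoef s1 s2 \<alpha> \<beta> G k = complex_of_real (\<alpha> / Dk s1 s2 \<alpha> \<beta> k) * G k"

definition ucoef_n :: "nat \<Rightarrow> real \<Rightarrow> real \<Rightarrow> real \<Rightarrow> real \<Rightarrow> (int ^ 'd::finite \<Rightarrow> complex) \<Rightarrow> int ^ 'd \<Rightarrow> complex" where
  "ucoef_n n s1 s2 \<alpha> \<beta> Gn k = (if k \<in> Zn n then ucoef s1 s2 \<alpha> \<beta> Gn k else 0)"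

definition vcoef_n :: "nat \<Rightarrow> real \<Rightarrow> real \<Rightarrow> real \<Rightarrow> real \<Rightarrow> (int ^ 'd::finite \<Rightarrow> complex) \<Rightarrow> int ^ 'd \<Rightarrow> complex" where
  "vcoef_n n s1 s2 \<alpha> \<beta> Gn k = (if k \<in> Zn n then vcoef s1 s2 \<alpha> \<beta> Gn k else 0)"

end

theory Submission
  imports Defs
begin

text \<open>Write E = G - Gn. Because Gn vanishes outside Z^d_n, both continuous and discrete
  coefficients are given by the same Fourier multipliers, so the three differences are the
  multipliers of the continuous problem applied to E. With the weights p = |k|^(2 s1),
  P = |k|^(2 (s2 - s1)) and D = alpha beta P + alpha + beta p P, the k-th term of the
  left-hand side is exactly (alpha/2) (1 - (beta p P / D)^2) |E_k|^2, which is termwise at most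
  (alpha/2) |E_k|^2. Summing in ennreal needs no convergence argument.\<close>

lemma multiplier_energy_identity:
  fixes p P \<alpha> \<beta> :: real
  assumes "p > 0" "P > 0" "\<alpha> > 0" "\<beta> \<ge> 0"
  defines "D \<equiv> \<alpha> * \<beta> * P + \<alpha> + \<beta> * (p * P)"
  shows "p * (\<alpha> * \<beta> * P / D)\<^sup>2 + \<beta> * (p * P) * (\<alpha> / D)\<^sup>2 + \<alpha> / 2 * ((\<alpha> * \<beta> * P + \<alpha>) / D)\<^sup>2
         = \<alpha> / 2 * (1 - (\<beta> * (p * P) / D)\<^sup>2)"
proof -
  have "D > 0"
    using assms unfolding D_def by (intro add_pos_nonneg add_nonneg_pos) auto
  moreover have "p * (\<alpha> * \<beta> * P)\<^sup>2 + \<beta> * (p * P) * \<alpha>\<^sup>2 + \<alpha> / 2 * (\<alpha> * \<beta> * P + \<alpha>)\<^sup>2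
      = \<alpha> / 2 * (D\<^sup>2 - (\<beta> * (p * P))\<^sup>2)"
    unfolding D_def by (simp add: algebra_simps power2_eq_square)
  ultimately show ?thesis
    by (simp add: field_simps)
qed

lemma multiplier_energy_le:
  fixes p P \<alpha> \<beta> :: real
  assumes "p > 0" "P > 0" "\<alpha> > 0" "\<beta> \<ge> 0"
  defines "D \<equiv> \<alpha> * \<beta> * P + \<alpha> + \<beta> * (p * P)"
  shows "p * (\<alpha> * \<beta> * P / D)\<^sup>2 + \<beta> * (p * P) * (\<alpha> / D)\<^sup>2 + \<alpha> / 2 * ((\<alpha> * \<beta> * P + \<alpha>) / D)\<^sup>2
         \<le> \<alpha> / 2"
  using multiplier_energy_identity[OF assms(1-4)] assms(3) unfolding D_def
  by (simp add: mult_left_le)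

lemma kabs_pos:
  fixes k :: "int ^ 'd::finite"
  assumes "k \<noteq> 0"
  shows "kabs k > 0"
proof -
  obtain i where i: "k $ i \<noteq> 0"
    using assms by (metis vec_eq_iff zero_index)
  have "0 < (real_of_int (k $ i))\<^sup>2"
    using i by simp
  also have "\<dots> \<le> (\<Sum>j\<in>UNIV. (real_of_int (k $ j))\<^sup>2)"
    by (rule member_le_sum) auto
  finally show ?thesis
    unfolding kabs_def by simp
qed

lemma ucoef_n_eq_ucoef:
  assumes "\<And>k. k \<notin> Zn n \<Longrightarrow> Gn k = 0"
  shows "ucoef_n n s1 s2 \<alpha> \<beta> Gn = ucoef s1 s2 \<alpha> \<beta> Gn"
  using assms by (auto simp: fun_eq_iff ucoef_n_def ucoef_def)

lemma vcoef_n_eq_vcoef: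
  assumes "\<And>k. k \<notin> Zn n \<Longrightarrow> Gn k = 0"
  shows "vcoef_n n s1 s2 \<alpha> \<beta> Gn = vcoef s1 s2 \<alpha> \<beta> Gn"
  using assms by (auto simp: fun_eq_iff vcoef_n_def vcoef_def)

lemma ucoef_diff:
  "ucoef s1 s2 \<alpha> \<beta> G k - ucoef s1 s2 \<alpha> \<beta> H k = ucoef s1 s2 \<alpha> \<beta> (\<lambda>k. G k - H k) k"
  by (simp add: ucoef_def right_diff_distrib)

lemma vcoef_diff:
  "vcoef s1 s2 \<alpha> \<beta> G k - vcoef s1 s2 \<alpha> \<beta> H k = vcoef s1 s2 \<alpha> \<beta> (\<lambda>k. G k - H k) k"
  by (simp add: vcoef_def right_diff_distrib)

lemma norm_of_real_mult_power2: "(cmod (complex_of_real c * z))\<^sup>2 = c\<^sup>2 * (cmod z)\<^sup>2"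
  by (simp add: norm_mult power_mult_distrib)

lemma multiplier_energy_bound:
  fixes E :: "int ^ 'd::finite \<Rightarrow> complex" and s1 s2 \<alpha> \<beta> :: real
  assumes "\<alpha> > 0" "\<beta> > 0" "k \<noteq> 0"
  shows "kabs k powr (2 * s1) * (cmod (ucoef s1 s2 \<alpha> \<beta> E k))\<^sup>2
       + \<beta> * (kabs k powr (2 * s2) * (cmod (vcoef s1 s2 \<alpha> \<beta> E k))\<^sup>2)
       + \<alpha> / 2 * (cmod (ucoef s1 s2 \<alpha> \<beta> E k + vcoef s1 s2 \<alpha> \<beta> E k))\<^sup>2
       \<le> \<alpha> / 2 * (cmod (E k))\<^sup>2"
proof -
  define p where "p = kabs k powr (2 * s1)"
  define P where "P = kabs k powr (2 * (s2 - s1))"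
  define D where "D = \<alpha> * \<beta> * P + \<alpha> + \<beta> * (p * P)"
  have "kabs k > 0"
    using assms(3) by (rule kabs_pos)
  then have p: "p > 0" and P: "P > 0" and pP: "kabs k powr (2 * s2) = p * P"
    unfolding p_def P_def by (simp_all add: powr_add[symmetric] algebra_simps)
  have Dk: "Dk s1 s2 \<alpha> \<beta> k = D"
    unfolding Dk_def D_def P_def pP ..
  have u: "ucoef s1 s2 \<alpha> \<beta> E k = complex_of_real (\<alpha> * \<beta> * P / D) * E k"
    unfolding ucoef_def Dk P_def ..
  have v: "vcoef s1 s2 \<alpha> \<beta> E k = complex_of_real (\<alpha> / D) * E k"
    unfolding vcoef_def Dk ..
  have uv: "ucoef s1 s2 \<alpha> \<beta> E k + vcoef s1 s2 \<alpha> \<beta> E k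
      = complex_of_real ((\<alpha> * \<beta> * P + \<alpha>) / D) * E k"
    unfolding u v by (simp add: add_divide_distrib distrib_right)
  from multiplier_energy_le[OF p P assms(1) less_imp_le[OF assms(2)]]
  have "(p * (\<alpha> * \<beta> * P / D)\<^sup>2 + \<beta> * (p * P) * (\<alpha> / D)\<^sup>2 + \<alpha> / 2 * ((\<alpha> * \<beta> * P + \<alpha>) / D)\<^sup>2)
      * (cmod (E k))\<^sup>2 \<le> \<alpha> / 2 * (cmod (E k))\<^sup>2"
    unfolding D_def[symmetric] by (rule mult_right_mono) simp
  then show ?thesis
    unfolding uv unfolding u v pP p_def[symmetric] norm_of_real_mult_power2
    by (simp add: algebra_simps)
qed

lemma infsum_cmult_ennreal:
  fixes f :: "'a \<Rightarrow> ennreal"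
  shows "(\<Sum>\<^sub>\<infinity>x\<in>A. c * f x) = c * (\<Sum>\<^sub>\<infinity>x\<in>A. f x)"
proof -
  have "(\<Sum>\<^sub>\<infinity>x\<in>A. c * f x) = (SUP F\<in>{F. finite F \<and> F \<subseteq> A}. c * sum f F)"
    by (simp add: nonneg_infsum_complete sum_distrib_left)
  also have "\<dots> = c * (SUP F\<in>{F. finite F \<and> F \<subseteq> A}. sum f F)"
    by (rule SUP_mult_left_ennreal[symmetric])
  also have "\<dots> = c * (\<Sum>\<^sub>\<infinity>x\<in>A. f x)"
    by (simp add: nonneg_infsum_complete)
  finally show ?thesis .
qed

lemma infsum_add_ennreal:
  fixes f g :: "'a \<Rightarrow> ennreal"
  shows "(\<Sum>\<^sub>\<infinity>x\<in>A. f x + g x) = (\<Sum>\<^sub>\<infinity>x\<in>A. f x) + (\<Sum>\<^sub>\<infinity>x\<in>A. g x)"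
  by (intro infsum_add nonneg_summable_on_complete) simp_all

lemma energy_as_infsum:
  fixes u v w :: "int ^ 'd::finite \<Rightarrow> complex" and \<beta> c :: real
  assumes "\<beta> \<ge> 0" "c \<ge> 0"
  shows "wnorm2 s1 u + ennreal \<beta> * wnorm2 s2 v + ennreal c * l2norm2 w
       = (\<Sum>\<^sub>\<infinity>k\<in>{k. k \<noteq> 0}. ennreal (kabs k powr (2 * s1) * (cmod (u k))\<^sup>2
            + \<beta> * (kabs k powr (2 * s2) * (cmod (v k))\<^sup>2) + c * (cmod (w k))\<^sup>2))"
  using assms
  by (simp add: wnorm2_def l2norm2_def infsum_add_ennreal infsum_cmult_ennreal ennreal_plus ennreal_mult)

theorem lemma8:
  fixes G Gn :: "int ^ 'd::finite \<Rightarrow> complex"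
    and n :: nat and s1 s2 \<alpha> \<beta> :: real
  assumes "s1 \<ge> 0" and "s2 \<le> 0" and "\<alpha> > 0" and "\<beta> > 0"
    and "(\<lambda>k. (cmod (G k))^2) summable_on {k. k \<noteq> 0}"
    and "\<And>k. k \<notin> Zn n \<Longrightarrow> Gn k = 0"
  shows "wnorm2 s1 (\<lambda>k. ucoef s1 s2 \<alpha> \<beta> G k - ucoef_n n s1 s2 \<alpha> \<beta> Gn k)
       + ennreal \<beta> * wnorm2 s2 (\<lambda>k. vcoef_n n s1 s2 \<alpha> \<beta> Gn k - vcoef s1 s2 \<alpha> \<beta> G k)
       + ennreal (\<alpha> / 2) * l2norm2 (\<lambda>k. ucoef_n n s1 s2 \<alpha> \<beta> Gn k + vcoef_n n s1 s2 \<alpha> \<beta> Gn k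
                                      - ucoef s1 s2 \<alpha> \<beta> G k - vcoef s1 s2 \<alpha> \<beta> G k)
       \<le> ennreal (\<alpha> / 2) * l2norm2 (\<lambda>k. G k - Gn k)"
    (is "?energy \<le> _")
proof -
  define E where "E k = G k - Gn k" for k
  have "ucoef s1 s2 \<alpha> \<beta> G k - ucoef_n n s1 s2 \<alpha> \<beta> Gn k = ucoef s1 s2 \<alpha> \<beta> E k"
    and "vcoef_n n s1 s2 \<alpha> \<beta> Gn k - vcoef s1 s2 \<alpha> \<beta> G k = - vcoef s1 s2 \<alpha> \<beta> E k"
    and "ucoef_n n s1 s2 \<alpha> \<beta> Gn k + vcoef_n n s1 s2 \<alpha> \<beta> Gn k - ucoef s1 s2 \<alpha> \<beta> G k - vcoef s1 s2 \<alpha> \<beta> G k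
         = - (ucoef s1 s2 \<alpha> \<beta> E k + vcoef s1 s2 \<alpha> \<beta> E k)" for k
    using assms(6) unfolding E_def
    by (simp_all add: ucoef_n_eq_ucoef vcoef_n_eq_vcoef flip: ucoef_diff vcoef_diff)
  then have "?energy = (\<Sum>\<^sub>\<infinity>k\<in>{k. k \<noteq> 0}. ennreal (kabs k powr (2 * s1) * (cmod (ucoef s1 s2 \<alpha> \<beta> E k))\<^sup>2
      + \<beta> * (kabs k powr (2 * s2) * (cmod (vcoef s1 s2 \<alpha> \<beta> E k))\<^sup>2)
      + \<alpha> / 2 * (cmod (ucoef s1 s2 \<alpha> \<beta> E k + vcoef s1 s2 \<alpha> \<beta> E k))\<^sup>2))"
    using assms(3,4) by (simp add: energy_as_infsum del: minus_add_distrib)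
  also have "\<dots> \<le> (\<Sum>\<^sub>\<infinity>k\<in>{k. k \<noteq> 0}. ennreal (\<alpha> / 2 * (cmod (E k))\<^sup>2))"
    using multiplier_energy_bound[OF assms(3,4)]
    by (intro infsum_mono nonneg_summable_on_complete ennreal_leI) auto
  also have "\<dots> = ennreal (\<alpha> / 2) * l2norm2 E"
    using assms(3) by (simp add: l2norm2_def flip: infsum_cmult_ennreal ennreal_mult)
  finally show ?thesis
    unfolding E_def .
qed

end
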